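(* Let $F_2=\langle x,y\rangle$ be the free group of rank $2$, and for $i=1,2,\ldots$ define the words $$a_i(x,y)=y^{(x y^i)^{2} x^{-1}}\, y^{-x}\in F_2 .$$ Let $G=\langle a_1,a_2,\ldots \mid r_1,r_2,\ldots\rangle$ be an arbitrary countable group given by generators and defining relations, where each relator $r_s$ is a group word in finitely many of the letters, say $r_s=r_s(a_{i_{s,1}},\ldots,a_{i_{s,k_s}})$. For each $s$ let $$r'_s(x,y)=r_s\big(a_{i_{s,1}}(x,y),\ldots,a_{i_{s,k_s}}(x,y)\big)\in F_2$$ be the word obtained by substituting $a_{i}(x,y)$ for every occurrence of $a_{i}$ in $r_s$. Then the map $\gamma: a_i\mapsto a_i(x,y)$, $i=1,2,\ldots$, defines an injective embedding of $G$ into the $2$-generator group $$T_G=\langle x,y \mid r'_1(x,y),\ r'_2(x,y),\ldots\rangle .$$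
   Context: Notation: $u^v=v^{-1}uv$ and $u^{-v}=(u^{-1})^v$. *)

theory Defs
  imports "HOL-Algebra.Group"
begin

text \<open>A group word over an alphabet of type 'a is a list of letters with signs:
  (a, True) stands for a, (a, False) stands for a^-1.\<close>

type_synonym 'a word = "('a \<times> bool) list"

definition inv_word :: "'a word \<Rightarrow> 'a word" where
  "inv_word w = rev (map (\<lambda>(a, b). (a, \<not> b)) w)"

inductive pres_eq :: "'a word set \<Rightarrow> 'a word \<Rightarrow> 'a word \<Rightarrow> bool" for R where
  refl: "pres_eq R w w"
| sym: "pres_eq R u v \<Longrightarrow> pres_eq R v u"
| trans: "pres_eq R u v \<Longrightarrow> pres_eq R v w \<Longrightarrow> pres_eq R u w"
| cancel: "pres_eq R (u @ [(a, b), (a, \<not> b)] @ v) (u @ v)"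
| relator: "r \<in> R \<Longrightarrow> pres_eq R (u @ r @ v) (u @ v)"

definition pres_class :: "'a word set \<Rightarrow> 'a word \<Rightarrow> 'a word set" where
  "pres_class R w = {v. pres_eq R v w}"

definition presentation :: "'a set \<Rightarrow> 'a word set \<Rightarrow> ('a word set) monoid" where
  "presentation X R =
     \<lparr> carrier = {pres_class R w | w. set w \<subseteq> X \<times> UNIV},
       mult = (\<lambda>A B. {w. \<exists>u\<in>A. \<exists>v\<in>B. pres_eq R w (u @ v)}),
       one = pres_class R [] \<rparr>"

datatype xy = X | Y

definition xw :: "xy word" where "xw = [(X, True)]"
definition xinv :: "xy word" where "xinv = [(X, False)]"
definition yw :: "xy word" where "yw = [(Y, True)]"
definition yinv :: "xy word" where "yinv = [(Y, False)]"

text \<open>u^v = v^-1 u v.  a_i = y^((x y^i)^2 x^-1) y^(-x) with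
  v = x y^i x y^i x^-1, i.e. a_i = v^-1 y v x^-1 y^-1 x.\<close>

definition conj_word :: "'a word \<Rightarrow> 'a word \<Rightarrow> 'a word" where
  "conj_word u v = inv_word v @ u @ v"

definition a_word :: "nat \<Rightarrow> xy word" where
  "a_word i =
     (let v = xw @ concat (replicate i yw) @ xw @ concat (replicate i yw) @ xinv
      in conj_word yw v @ conj_word yinv xw)"

definition subst_a :: "nat word \<Rightarrow> xy word" where
  "subst_a w = concat (map (\<lambda>(i, b). if b then a_word i else inv_word (a_word i)) w)"

end

theory Submission
  imports Defs
begin

text \<open>The free group F_2 acts on the points (k, n, h, v), with integers k, n and h, v in G: x raises
  the level k, and y acts on level k by the permutation y_level k of the triples (n, h, v), which
  is the identity unless -2 \<le> k \<le> 1. Read letter by letter, a_i acts on level k as the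
  commutator of y_level (k + 1) with (y_level k)^i \<circ> (y_level (k - 1))^i. Away from level 0 the
  two commute. At level 0, (y_level (-1))^i lifts the counter n from 0 to i, (y_level 0)^i walks it
  back while multiplying v by the telescoping product of the g_(m-1)^-1 g_m, i.e. by g_i, and
  y_level 1 multiplies h by v when n = 0. So a_i acts by h \<mapsto> g_i h at the points with
  k = n = 0 and trivially elsewhere. Hence every substituted relator acts trivially, the action
  factors through T_G, and the orbit of (0, 0, 1, 1) separates the elements of G.\<close>

section \<open>Presented groups\<close>

lemma pres_eq_context:
  assumes "pres_eq R u v"
  shows "pres_eq R (p @ u @ q) (p @ v @ q)"
  using assms
proof (induction rule: pres_eq.induct)
  case (refl w)
  show ?case by (rule pres_eq.refl)
next
  case (sym u v)
  show ?case using sym.IH by (rule pres_eq.sym)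
next
  case (trans u v w)
  show ?case using trans.IH by (rule pres_eq.trans)
next
  case (cancel u a b v)
  show ?case using pres_eq.cancel[of R "p @ u" a b "v @ q"] by simp
next
  case (relator r u v)
  then show ?case using pres_eq.relator[of r R "p @ u" "v @ q"] by simp
qed

lemma pres_eq_append:
  assumes "pres_eq R u u'" and "pres_eq R v v'"
  shows "pres_eq R (u @ v) (u' @ v')"
  using pres_eq_context[OF assms(1), of "[]" v] pres_eq_context[OF assms(2), of u' "[]"]
  by (auto intro: pres_eq.trans)

lemma pres_eq_Nil_context:
  assumes "pres_eq R w []"
  shows "pres_eq R (p @ w @ q) (p @ q)"
  using pres_eq_context[OF assms, of p q] by simp

lemma pres_class_eq_iff: "pres_class R u = pres_class R v \<longleftrightarrow> pres_eq R u v"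
  unfolding pres_class_def
  by (auto intro: pres_eq.refl pres_eq.sym pres_eq.trans)

lemma carrier_presentation:
  "carrier (presentation A R) = {pres_class R w | w. set w \<subseteq> A \<times> UNIV}"
  by (simp add: presentation_def)

lemma presentation_carrierE:
  assumes "x \<in> carrier (presentation A R)"
  obtains w where "x = pres_class R w" and "set w \<subseteq> A \<times> UNIV"
  using assms by (auto simp: carrier_presentation)

lemma pres_class_in_carrier:
  "set w \<subseteq> A \<times> UNIV \<Longrightarrow> pres_class R w \<in> carrier (presentation A R)"
  by (auto simp: carrier_presentation)

lemma one_presentation: "\<one>\<^bsub>presentation A R\<^esub> = pres_class R []"
  by (simp add: presentation_def)

lemma mult_presentation:
  "pres_class R u \<otimes>\<^bsub>presentation A R\<^esub> pres_class R v = pres_class R (u @ v)"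
  unfolding presentation_def pres_class_def
  by (auto intro: pres_eq.trans pres_eq.sym pres_eq.refl pres_eq_append)

lemma inv_word_Nil [simp]: "inv_word [] = []"
  by (simp add: inv_word_def)

lemma inv_word_Cons [simp]: "inv_word ((a, b) # w) = inv_word w @ [(a, \<not> b)]"
  by (simp add: inv_word_def)

lemma inv_word_append [simp]: "inv_word (u @ v) = inv_word v @ inv_word u"
  by (simp add: inv_word_def)

lemma inv_word_inv_word [simp]: "inv_word (inv_word w) = w"
  by (simp add: inv_word_def rev_map comp_def case_prod_beta)

lemma set_inv_word_subset: "set w \<subseteq> A \<times> UNIV \<Longrightarrow> set (inv_word w) \<subseteq> A \<times> UNIV"
  by (auto simp: inv_word_def)

lemma pres_eq_inv_word_append: "pres_eq R (inv_word w @ w) []"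
proof (induction w)
  case Nil
  show ?case by (simp add: pres_eq.refl)
next
  case (Cons l w)
  obtain a b where l: "l = (a, b)" by force
  have "pres_eq R (inv_word w @ [(a, \<not> b), (a, \<not> \<not> b)] @ w) (inv_word w @ w)"
    by (rule pres_eq.cancel)
  then show ?case using Cons by (auto simp: l intro: pres_eq.trans)
qed

lemma pres_eq_append_inv_word: "pres_eq R (w @ inv_word w) []"
  using pres_eq_inv_word_append[of R "inv_word w"] by simp

lemma group_presentation: "group (presentation A R)"
proof (rule groupI)
  fix x y
  assume "x \<in> carrier (presentation A R)" and "y \<in> carrier (presentation A R)"
  then show "x \<otimes>\<^bsub>presentation A R\<^esub> y \<in> carrier (presentation A R)"
    by (fastforce elim!: presentation_carrierE simp: mult_presentation intro!: pres_class_in_carrier)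
next
  show "\<one>\<^bsub>presentation A R\<^esub> \<in> carrier (presentation A R)"
    by (auto simp: one_presentation intro!: pres_class_in_carrier)
next
  fix x y z
  assume "x \<in> carrier (presentation A R)" and "y \<in> carrier (presentation A R)"
    and "z \<in> carrier (presentation A R)"
  then show "x \<otimes>\<^bsub>presentation A R\<^esub> y \<otimes>\<^bsub>presentation A R\<^esub> z =
      x \<otimes>\<^bsub>presentation A R\<^esub> (y \<otimes>\<^bsub>presentation A R\<^esub> z)"
    by (auto elim!: presentation_carrierE simp: mult_presentation)
next
  fix x
  assume "x \<in> carrier (presentation A R)"
  then show "\<one>\<^bsub>presentation A R\<^esub> \<otimes>\<^bsub>presentation A R\<^esub> x = x"
    by (auto elim!: presentation_carrierE simp: mult_presentation one_presentation)
next
  fix x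
  assume "x \<in> carrier (presentation A R)"
  then obtain w where x: "x = pres_class R w" and w: "set w \<subseteq> A \<times> UNIV"
    by (rule presentation_carrierE)
  have "pres_class R (inv_word w) \<otimes>\<^bsub>presentation A R\<^esub> x = \<one>\<^bsub>presentation A R\<^esub>"
    by (simp add: x mult_presentation one_presentation pres_class_eq_iff pres_eq_inv_word_append)
  moreover have "pres_class R (inv_word w) \<in> carrier (presentation A R)"
    using set_inv_word_subset[OF w] by (rule pres_class_in_carrier)
  ultimately show "\<exists>y\<in>carrier (presentation A R). y \<otimes>\<^bsub>presentation A R\<^esub> x = \<one>\<^bsub>presentation A R\<^esub>"
    by blast
qed

lemma inv_pres_class_letter:
  assumes "a \<in> A"
  shows "inv\<^bsub>presentation A R\<^esub> pres_class R [(a, True)] = pres_class R [(a, False)]"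
proof (rule group.inv_equality[OF group_presentation])
  show "pres_class R [(a, False)] \<otimes>\<^bsub>presentation A R\<^esub> pres_class R [(a, True)] = \<one>\<^bsub>presentation A R\<^esub>"
    using pres_eq_inv_word_append[of R "[(a, True)]"]
    by (simp add: mult_presentation one_presentation pres_class_eq_iff)
  show "pres_class R [(a, True)] \<in> carrier (presentation A R)"
    and "pres_class R [(a, False)] \<in> carrier (presentation A R)"
    using assms by (auto intro!: pres_class_in_carrier)
qed

fun eval_word :: "('g, 'm) monoid_scheme \<Rightarrow> ('a \<Rightarrow> 'g) \<Rightarrow> 'a word \<Rightarrow> 'g" where
  "eval_word G g [] = \<one>\<^bsub>G\<^esub>"
| "eval_word G g ((a, b) # w) = (if b then g a else inv\<^bsub>G\<^esub> g a) \<otimes>\<^bsub>G\<^esub> eval_word G g w"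

lemma (in group) eval_word_closed:
  "(\<And>a. g a \<in> carrier G) \<Longrightarrow> eval_word G g w \<in> carrier G"
  by (induction w) auto

lemma eval_word_presentation:
  assumes "set w \<subseteq> A \<times> UNIV" and "\<And>a. a \<in> A \<Longrightarrow> g a = pres_class R [(a, True)]"
  shows "eval_word (presentation A R) g w = pres_class R w"
  using assms(1)
proof (induction w)
  case Nil
  show ?case by (simp add: one_presentation)
next
  case (Cons l w)
  obtain a b where l: "l = (a, b)" by force
  have a: "a \<in> A" and w: "set w \<subseteq> A \<times> UNIV" using Cons.prems by (auto simp: l)
  have "pres_class R ((a, b) # w) = pres_class R [(a, b)] \<otimes>\<^bsub>presentation A R\<^esub> pres_class R w"
    by (simp add: mult_presentation)
  then show ?case
    using Cons.IH[OF w] by (simp add: l assms(2)[OF a] inv_pres_class_letter[OF a])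
qed

section \<open>Substitution of words and actions of words\<close>

definition subst_word :: "('a \<Rightarrow> 'b word) \<Rightarrow> 'a word \<Rightarrow> 'b word" where
  "subst_word s w = concat (map (\<lambda>(a, b). if b then s a else inv_word (s a)) w)"

lemma subst_word_Nil [simp]: "subst_word s [] = []"
  and subst_word_Cons [simp]:
    "subst_word s ((a, b) # w) = (if b then s a else inv_word (s a)) @ subst_word s w"
  and subst_word_append [simp]: "subst_word s (u @ v) = subst_word s u @ subst_word s v"
  by (simp_all add: subst_word_def)

lemma subst_a_eq_subst_word: "subst_a = subst_word a_word"
  by (simp add: fun_eq_iff subst_a_def subst_word_def)

lemma pres_eq_subst_word:
  assumes "pres_eq R u v"
  shows "pres_eq (subst_word s ` R) (subst_word s u) (subst_word s v)"
  using assms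
proof (induction rule: pres_eq.induct)
  case (refl w)
  show ?case by (rule pres_eq.refl)
next
  case (sym u v)
  show ?case using sym.IH by (rule pres_eq.sym)
next
  case (trans u v w)
  show ?case using trans.IH by (rule pres_eq.trans)
next
  case (cancel u a b v)
  have "pres_eq (subst_word s ` R) (subst_word s [(a, b), (a, \<not> b)]) []"
    by (simp add: pres_eq_inv_word_append pres_eq_append_inv_word)
  then show ?case using pres_eq_Nil_context by fastforce
next
  case (relator r u v)
  then show ?case using pres_eq.relator[of "subst_word s r"] by simp
qed

definition pres_subst :: "'a word set \<Rightarrow> ('a \<Rightarrow> 'b word) \<Rightarrow> 'a word set \<Rightarrow> 'b word set" where
  "pres_subst R s C = (\<Union>u\<in>C. pres_class (subst_word s ` R) (subst_word s u))"

lemma pres_subst_class: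
  "pres_subst R s (pres_class R w) = pres_class (subst_word s ` R) (subst_word s w)"
proof -
  have "pres_class (subst_word s ` R) (subst_word s u) = pres_class (subst_word s ` R) (subst_word s w)"
    if "u \<in> pres_class R w" for u
  proof -
    have "pres_eq R u w" using that by (simp add: pres_class_def)
    then show ?thesis by (simp add: pres_class_eq_iff pres_eq_subst_word)
  qed
  moreover have "w \<in> pres_class R w"
    by (simp add: pres_class_def pres_eq.refl)
  ultimately show ?thesis
    unfolding pres_subst_def by blast
qed

lemma pres_subst_hom:
  "pres_subst R s \<in> hom (presentation A R) (presentation UNIV (subst_word s ` R))"
proof (rule homI)
  fix x
  assume "x \<in> carrier (presentation A R)"
  then show "pres_subst R s x \<in> carrier (presentation UNIV (subst_word s ` R))"
    by (auto elim!: presentation_carrierE simp: pres_subst_class intro!: pres_class_in_carrier)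
next
  fix x y
  assume "x \<in> carrier (presentation A R)" and "y \<in> carrier (presentation A R)"
  then show "pres_subst R s (x \<otimes>\<^bsub>presentation A R\<^esub> y) =
      pres_subst R s x \<otimes>\<^bsub>presentation UNIV (subst_word s ` R)\<^esub> pres_subst R s y"
    by (auto elim!: presentation_carrierE simp: pres_subst_class mult_presentation)
qed

primrec act_word :: "('a \<times> bool \<Rightarrow> 'c \<Rightarrow> 'c) \<Rightarrow> 'a word \<Rightarrow> 'c \<Rightarrow> 'c" where
  "act_word f [] = id"
| "act_word f (l # w) = f l \<circ> act_word f w"

lemma act_word_append [simp]: "act_word f (u @ v) = act_word f u \<circ> act_word f v"
  by (induction u) auto

locale word_action =
  fixes f :: "'a \<times> bool \<Rightarrow> 'c \<Rightarrow> 'c" and D :: "'c set"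
  assumes letter_closed: "x \<in> D \<Longrightarrow> f l x \<in> D"
    and letter_inverse: "x \<in> D \<Longrightarrow> f (a, \<not> b) (f (a, b) x) = x"
begin

lemma act_word_closed: "x \<in> D \<Longrightarrow> act_word f w x \<in> D"
  by (induction w) (auto intro: letter_closed)

lemma act_word_inv_word: "x \<in> D \<Longrightarrow> act_word f (inv_word w) (act_word f w x) = x"
proof (induction w)
  case Nil
  show ?case by simp
next
  case (Cons l w)
  obtain a b where l: "l = (a, b)" by force
  show ?case
    using Cons letter_inverse[OF act_word_closed[OF Cons.prems]] by (simp add: l)
qed

lemma act_word_pres_eq:
  assumes relators: "\<And>r x. r \<in> R \<Longrightarrow> x \<in> D \<Longrightarrow> act_word f r x = x"
    and "pres_eq R u v" and "x \<in> D"
  shows "act_word f u x = act_word f v x"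
  using assms(2,3)
proof (induction arbitrary: x rule: pres_eq.induct)
  case (cancel u a b v)
  have "f (a, b) (f (a, \<not> b) y) = y" if "y \<in> D" for y
    using letter_inverse[OF that, of a "\<not> b"] by simp
  then show ?case using act_word_closed[OF cancel.prems] by simp
next
  case (relator r u v)
  then show ?case using act_word_closed relators by simp
qed auto

lemma inj_on_pres_subst:
  assumes relators: "\<And>r x. r \<in> R \<Longrightarrow> x \<in> D \<Longrightarrow> act_word f (subst_word s r) x = x"
    and orbit: "\<And>w. set w \<subseteq> A \<times> UNIV \<Longrightarrow> act_word f (subst_word s w) x\<^sub>0 = \<theta> (pres_class R w)"
    and separating: "inj_on \<theta> (carrier (presentation A R))"
    and "x\<^sub>0 \<in> D"
  shows "inj_on (pres_subst R s) (carrier (presentation A R))"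
proof (rule inj_onI)
  fix x y
  assume x: "x \<in> carrier (presentation A R)" and y: "y \<in> carrier (presentation A R)"
    and eq: "pres_subst R s x = pres_subst R s y"
  obtain u where u: "x = pres_class R u" "set u \<subseteq> A \<times> UNIV"
    using x by (rule presentation_carrierE)
  obtain v where v: "y = pres_class R v" "set v \<subseteq> A \<times> UNIV"
    using y by (rule presentation_carrierE)
  have "pres_eq (subst_word s ` R) (subst_word s u) (subst_word s v)"
    using eq by (simp add: u v pres_subst_class pres_class_eq_iff)
  moreover have "\<And>r x. r \<in> subst_word s ` R \<Longrightarrow> x \<in> D \<Longrightarrow> act_word f r x = x"
    using relators by blast
  ultimately have "act_word f (subst_word s u) x\<^sub>0 = act_word f (subst_word s v) x\<^sub>0"
    using act_word_pres_eq \<open>x\<^sub>0 \<in> D\<close> by blast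
  then have "\<theta> x = \<theta> y"
    by (simp add: orbit u v)
  then show "x = y"
    using separating x y by (simp add: inj_on_eq_iff)
qed

end

section \<open>An action of F_2 in which a_i acts as g_i\<close>

lemma funpow_inverse_on:
  assumes "\<And>x. x \<in> D \<Longrightarrow> f x \<in> D" and "\<And>x. x \<in> D \<Longrightarrow> g (f x) = x" and "x \<in> D"
  shows "(g ^^ n) ((f ^^ n) x) = x"
  using assms(3)
proof (induction n arbitrary: x)
  case 0
  show ?case by simp
next
  case (Suc n)
  have "(g ^^ Suc n) ((f ^^ Suc n) x) = g ((g ^^ n) ((f ^^ n) (f x)))"
    by (simp add: funpow_swap1)
  also have "\<dots> = x"
    using Suc assms(1,2) by simp
  finally show ?case .
qed

lemma funpow_closed:
  "(\<And>x. x \<in> D \<Longrightarrow> f x \<in> D) \<Longrightarrow> x \<in> D \<Longrightarrow> (f ^^ n) x \<in> D"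
  by (induction n) auto

lemma inv_word_x_y [simp]:
  "inv_word xw = xinv" "inv_word xinv = xw" "inv_word yw = yinv"
  by (simp_all add: xw_def xinv_def yw_def yinv_def)

lemma inv_word_y_pow: "inv_word (concat (replicate i yw)) = concat (replicate i yinv)"
  by (induction i) (simp_all add: yw_def yinv_def replicate_append_same[symmetric])

type_synonym 'g state = "int \<times> 'g \<times> 'g"

locale a_word_action = group G for G :: "('g, 'm) monoid_scheme" (structure) +
  fixes g :: "nat \<Rightarrow> 'g"
  assumes g_closed [simp]: "g i \<in> carrier G"
    and g_zero [simp]: "g 0 = \<one>"
    \<comment> \<open>base of the telescoping product; a_0 is trivial in F_2 anyway\<close>
begin

definition states :: "'g state set" where
  "states = UNIV \<times> carrier G \<times> carrier G"

definition g_step :: "nat \<Rightarrow> 'g" where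
  "g_step m = inv g (m - 1) \<otimes> g m"

definition y_level :: "int \<Rightarrow> 'g state \<Rightarrow> 'g state" where
  "y_level k = (\<lambda>(n, h, v).
     if k = -2 then (n - 1, h, v)
     else if k = -1 then (n + 1, h, v)
     else if k = 0 then (n - 1, h, if 1 \<le> n then g_step (nat n) \<otimes> v else v)
     else if k = 1 then (n, if n = 0 then v \<otimes> h else h, v)
     else (n, h, v))"

definition y_inv_level :: "int \<Rightarrow> 'g state \<Rightarrow> 'g state" where
  "y_inv_level k = (\<lambda>(n, h, v).
     if k = -2 then (n + 1, h, v)
     else if k = -1 then (n - 1, h, v)
     else if k = 0 then (n + 1, h, if 0 \<le> n then inv g_step (nat (n + 1)) \<otimes> v else v)
     else if k = 1 then (n, if n = 0 then inv v \<otimes> h else h, v)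
     else (n, h, v))"

lemma g_step_closed [simp]: "g_step m \<in> carrier G"
  by (simp add: g_step_def)

lemma y_level_closed: "s \<in> states \<Longrightarrow> y_level k s \<in> states"
  by (auto simp: y_level_def states_def)

lemma y_inv_level_closed: "s \<in> states \<Longrightarrow> y_inv_level k s \<in> states"
  by (auto simp: y_inv_level_def states_def)

lemma y_inv_level_y_level: "s \<in> states \<Longrightarrow> y_inv_level k (y_level k s) = s"
  by (auto simp: y_level_def y_inv_level_def states_def m_assoc[symmetric])

lemma y_level_y_inv_level: "s \<in> states \<Longrightarrow> y_level k (y_inv_level k s) = s"
  by (auto simp: y_level_def y_inv_level_def states_def m_assoc[symmetric])

lemma y_level_pow_closed: "s \<in> states \<Longrightarrow> (y_level k ^^ i) s \<in> states"
  by (rule funpow_closed) (rule y_level_closed)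

lemma y_inv_level_pow_y_level_pow: "s \<in> states \<Longrightarrow> (y_inv_level k ^^ i) ((y_level k ^^ i) s) = s"
  by (rule funpow_inverse_on) (auto intro: y_level_closed y_inv_level_y_level)

lemma y_level_trivial: "k \<notin> {-2, -1, 0, 1} \<Longrightarrow> y_level k = id"
  and y_inv_level_trivial: "k \<notin> {-2, -1, 0, 1} \<Longrightarrow> y_inv_level k = id"
  by (auto simp: fun_eq_iff y_level_def y_inv_level_def)

lemma y_inv_level_shifts: "y_inv_level (-1) = y_level (-2)" "y_inv_level (-2) = y_level (-1)"
  by (auto simp: fun_eq_iff y_level_def y_inv_level_def)

lemma y_level_shift:
  "y_level (-1) (n, h, v) = (n + 1, h, v)"
  "y_level (-2) (n, h, v) = (n - 1, h, v)"
  by (simp_all add: y_level_def)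

lemma y_level_shift_pow:
  "(y_level (-1) ^^ i) (n, h, v) = (n + int i, h, v)"
  "(y_level (-2) ^^ i) (n, h, v) = (n - int i, h, v)"
  by (induction i) (auto simp: y_level_shift)

lemma y_level_shift_pow_cancel:
  "(y_level (-1) ^^ i) ((y_level (-2) ^^ i) s) = s"
  "(y_level (-2) ^^ i) ((y_level (-1) ^^ i) s) = s"
  by (cases s; simp add: y_level_shift_pow)+

lemma y_level_0_pow:
  assumes "v \<in> carrier G"
  shows "(y_level 0 ^^ i) (int (j + i), h, v) = (int j, h, inv g j \<otimes> g (j + i) \<otimes> v)"
  using assms
proof (induction i arbitrary: v)
  case 0
  then show ?case by (simp add: m_assoc[symmetric])
next
  case (Suc i)
  have "(y_level 0 ^^ Suc i) (int (j + Suc i), h, v)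
      = (y_level 0 ^^ i) (y_level 0 (int (Suc (j + i)), h, v))"
    by (simp only: funpow_Suc_right comp_def add_Suc_right)
  also have "y_level 0 (int (Suc (j + i)), h, v) = (int (j + i), h, g_step (Suc (j + i)) \<otimes> v)"
    by (simp add: y_level_def nat_add_distrib)
  also have "(y_level 0 ^^ i) \<dots> = (int j, h, inv g j \<otimes> g (j + Suc i) \<otimes> v)"
    using Suc by (simp add: g_step_def m_assoc) (simp add: m_assoc[symmetric])
  finally show ?case .
qed

lemma y_level_0_pow_from_zero:
  "v \<in> carrier G \<Longrightarrow> (y_level 0 ^^ i) ((y_level (-1) ^^ i) (0, h, v)) = (0, h, g i \<otimes> v)"
  using y_level_0_pow[of v i 0 h] by (simp add: y_level_shift_pow)

lemma a_word_level_zero: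
  assumes "(n, h, v) \<in> states"
  shows "(y_inv_level (-1) ^^ i) ((y_inv_level 0 ^^ i) (y_level 1 ((y_level 0 ^^ i)
           ((y_level (-1) ^^ i) (y_inv_level 1 (n, h, v))))))
         = (n, if n = 0 then g i \<otimes> h else h, v)"
proof (cases "n = 0")
  case True
  have hv: "h \<in> carrier G" "v \<in> carrier G"
    using assms by (auto simp: states_def)
  have "y_level 1 ((y_level 0 ^^ i) ((y_level (-1) ^^ i) (y_inv_level 1 (n, h, v))))
      = y_level 1 ((y_level 0 ^^ i) ((y_level (-1) ^^ i) (0, inv v \<otimes> h, v)))"
    by (simp add: True y_inv_level_def)
  also have "\<dots> = y_level 1 (0, inv v \<otimes> h, g i \<otimes> v)"
    using hv by (simp add: y_level_0_pow_from_zero)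
  also have "\<dots> = (0, g i \<otimes> h, g i \<otimes> v)"
    using hv by (simp add: y_level_def m_assoc) (simp add: m_assoc[symmetric])
  also have "\<dots> = (y_level 0 ^^ i) ((y_level (-1) ^^ i) (0, g i \<otimes> h, v))"
    using hv by (simp add: y_level_0_pow_from_zero)
  finally show ?thesis
    using hv
    by (simp add: True y_inv_level_shifts y_level_shift_pow y_inv_level_pow_y_level_pow states_def)
next
  case False
  let ?t = "(y_level 0 ^^ i) ((y_level (-1) ^^ i) (n, h, v))"
  have "fst ((y_level 0 ^^ i) s) = fst s - int i" for s
    by (induction i) (auto simp: y_level_def split: prod.splits)
  then have "fst ?t = n"
    by (simp add: y_level_shift_pow)
  then have "y_level 1 ?t = ?t"
    using False by (auto simp: y_level_def split: prod.splits)
  moreover have "y_inv_level 1 (n, h, v) = (n, h, v)"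
    using False by (simp add: y_inv_level_def)
  ultimately show ?thesis
    using assms False
    by (simp add: y_inv_level_shifts y_inv_level_pow_y_level_pow y_level_pow_closed
        y_level_shift_pow_cancel)
qed

lemma a_word_level_nonzero:
  assumes "k \<noteq> 0" and s: "s \<in> states"
  shows "(y_inv_level (k - 1) ^^ i) ((y_inv_level k ^^ i) (y_level (k + 1) ((y_level k ^^ i)
           ((y_level (k - 1) ^^ i) (y_inv_level (k + 1) s))))) = s"
proof -
  obtain n h v where s_def: "s = (n, h, v)" by (cases s)
  consider "k \<ge> 1" | "k = -1" | "k = -2" | "k = -3" | "k \<le> -4"
    using assms(1) by linarith
  then show ?thesis
  proof cases
    case 1
    then show ?thesis
      using s by (simp add: y_level_trivial y_inv_level_trivial y_level_pow_closed
          y_inv_level_pow_y_level_pow)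
  next
    case 2
    then show ?thesis
      using s by (simp add: y_inv_level_shifts y_level_shift_pow_cancel y_level_y_inv_level)
  next
    case 3
    then show ?thesis
      by (simp add: s_def y_inv_level_shifts y_level_shift y_level_shift_pow y_level_trivial
          y_inv_level_trivial)
  next
    case 4
    then show ?thesis
      by (simp add: s_def y_inv_level_shifts y_level_shift y_level_trivial y_inv_level_trivial)
  next
    case 5
    then show ?thesis
      by (simp add: y_level_trivial y_inv_level_trivial)
  qed
qed

definition xy_action :: "xy \<times> bool \<Rightarrow> int \<times> 'g state \<Rightarrow> int \<times> 'g state" where
  "xy_action l = (\<lambda>(k, s). case l of
      (X, b) \<Rightarrow> (if b then k + 1 else k - 1, s)
    | (Y, b) \<Rightarrow> (k, if b then y_level k s else y_inv_level k s))"

definition points :: "(int \<times> 'g state) set" where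
  "points = UNIV \<times> states"

sublocale word_action xy_action points
proof
  fix p l
  assume "p \<in> points"
  then show "xy_action l p \<in> points"
    by (cases l) (auto simp: xy_action_def points_def y_level_closed y_inv_level_closed
        split: xy.splits)
next
  fix p a b
  assume "p \<in> points"
  then show "xy_action (a, \<not> b) (xy_action (a, b) p) = p"
    by (cases a; cases b)
      (auto simp: xy_action_def points_def y_inv_level_y_level y_level_y_inv_level)
qed

lemma act_letters [simp]:
  "act_word xy_action xw (k, s) = (k + 1, s)"
  "act_word xy_action xinv (k, s) = (k - 1, s)"
  "act_word xy_action yw (k, s) = (k, y_level k s)"
  "act_word xy_action yinv (k, s) = (k, y_inv_level k s)"
  by (simp_all add: xw_def xinv_def yw_def yinv_def xy_action_def)

lemma act_y_pow [simp]:
  "act_word xy_action (concat (replicate i yw)) (k, s) = (k, (y_level k ^^ i) s)"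
  "act_word xy_action (concat (replicate i yinv)) (k, s) = (k, (y_inv_level k ^^ i) s)"
  by (induction i) simp_all

definition base_mult :: "'g \<Rightarrow> int \<times> 'g state \<Rightarrow> int \<times> 'g state" where
  "base_mult c = (\<lambda>(k, n, h, v). if k = 0 \<and> n = 0 then (k, n, c \<otimes> h, v) else (k, n, h, v))"

lemma base_mult_closed: "c \<in> carrier G \<Longrightarrow> p \<in> points \<Longrightarrow> base_mult c p \<in> points"
  by (auto simp: base_mult_def points_def states_def)

lemma base_mult_mult:
  "c \<in> carrier G \<Longrightarrow> d \<in> carrier G \<Longrightarrow> p \<in> points \<Longrightarrow>
     base_mult (c \<otimes> d) p = base_mult c (base_mult d p)"
  by (auto simp: base_mult_def points_def states_def m_assoc)

lemma base_mult_one: "p \<in> points \<Longrightarrow> base_mult \<one> p = p"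
  by (auto simp: base_mult_def points_def states_def)

lemma base_point_in_points: "(0, 0, \<one>, \<one>) \<in> points"
  by (simp add: points_def states_def)

lemma inj_on_base_mult: "inj_on (\<lambda>c. base_mult c (0, 0, \<one>, \<one>)) (carrier G)"
  by (auto intro!: inj_onI simp: base_mult_def)

lemma act_a_word:
  assumes "p \<in> points"
  shows "act_word xy_action (a_word i) p = base_mult (g i) p"
proof -
  obtain k n h v where p: "p = (k, n, h, v)" by (cases p) auto
  have s: "(n, h, v) \<in> states" using assms by (simp add: p points_def)
  have "act_word xy_action (a_word i) p
      = (k, (y_inv_level (k - 1) ^^ i) ((y_inv_level k ^^ i) (y_level (k + 1) ((y_level k ^^ i)
           ((y_level (k - 1) ^^ i) (y_inv_level (k + 1) (n, h, v)))))))"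
    by (simp add: p a_word_def Let_def conj_word_def inv_word_y_pow algebra_simps)
  then show ?thesis
    using a_word_level_zero[OF s] a_word_level_nonzero[OF _ s]
    by (cases "k = 0") (simp_all add: p base_mult_def)
qed

lemma act_inv_a_word:
  assumes "p \<in> points"
  shows "act_word xy_action (inv_word (a_word i)) p = base_mult (inv g i) p"
proof -
  let ?q = "base_mult (inv g i) p"
  have q: "?q \<in> points" using assms by (simp add: base_mult_closed)
  have "act_word xy_action (a_word i) ?q = p"
    using assms q by (simp add: act_a_word base_mult_mult[symmetric] base_mult_one)
  then show ?thesis
    using act_word_inv_word[OF q, of "a_word i"] by simp
qed

lemma act_subst_a_word:
  assumes "p \<in> points"
  shows "act_word xy_action (subst_word a_word w) p = base_mult (eval_word G g w) p"
proof (induction w)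
  case Nil
  show ?case using assms by (simp add: base_mult_one)
next
  case (Cons l w)
  obtain a b where l: "l = (a, b)" by force
  have "base_mult (eval_word G g w) p \<in> points"
    using assms by (simp add: base_mult_closed eval_word_closed)
  then show ?case
    using assms Cons
    by (simp add: l act_a_word act_inv_a_word base_mult_mult eval_word_closed)
qed

end

theorem theorem1p1:
  fixes R :: "nat word set"
  assumes "\<forall>r\<in>R. \<forall>(i, b)\<in>set r. i \<ge> 1"
  shows "\<exists>h. h \<in> hom (presentation {1..} R) (presentation UNIV (subst_a ` R))
           \<and> inj_on h (carrier (presentation {1..} R))
           \<and> (\<forall>i\<ge>1. h (pres_class R [(i, True)]) = pres_class (subst_a ` R) (a_word i))"
proof -
  let ?G = "presentation {1..} R"
  define g where "g i = (if i = 0 then \<one>\<^bsub>?G\<^esub> else pres_class R [(i, True)])" for i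
  interpret a_word_action ?G g
    by (intro a_word_action.intro a_word_action_axioms.intro group_presentation)
      (auto simp: g_def one_presentation intro: pres_class_in_carrier)
  have eval: "eval_word ?G g w = pres_class R w" if "set w \<subseteq> {1..} \<times> UNIV" for w
    using that by (rule eval_word_presentation) (simp add: g_def)
  have relators: "act_word xy_action (subst_word a_word r) p = p"
    if "r \<in> R" and "p \<in> points" for r p
  proof -
    have "set r \<subseteq> {1..} \<times> UNIV" using assms that(1) by fastforce
    then have "eval_word ?G g r = pres_class R r" by (rule eval)
    also have "\<dots> = \<one>\<^bsub>?G\<^esub>"
      using pres_eq.relator[OF that(1), of "[]" "[]"] by (simp add: one_presentation pres_class_eq_iff)
    finally show ?thesis
      using act_subst_a_word[OF that(2)] base_mult_one[OF that(2)] by simp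
  qed
  have "inj_on (pres_subst R a_word) (carrier ?G)"
  proof (rule inj_on_pres_subst[OF relators _ inj_on_base_mult])
    show "(0, 0, \<one>\<^bsub>?G\<^esub>, \<one>\<^bsub>?G\<^esub>) \<in> points"
      by (rule base_point_in_points)
    show "act_word xy_action (subst_word a_word w) (0, 0, \<one>\<^bsub>?G\<^esub>, \<one>\<^bsub>?G\<^esub>)
        = base_mult (pres_class R w) (0, 0, \<one>\<^bsub>?G\<^esub>, \<one>\<^bsub>?G\<^esub>)"
      if "set w \<subseteq> {1..} \<times> UNIV" for w
      using act_subst_a_word[OF base_point_in_points] eval[OF that] by simp
  qed
  then show ?thesis
    using pres_subst_hom[of R a_word "{1..}"]
    by (auto simp: subst_a_eq_subst_word pres_subst_class intro!: exI[of _ "pres_subst R a_word"])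
qed

end
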